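(* Let $0<\epsilon<1$ and let $(G,\lambda^\mu),(G,\lambda^\nu)$ be two hardcore models on $G=(V,E)$, $n=|V|$, with Gibbs distributions $\mu,\nu$, both satisfying the uniqueness condition, with $D:=d_{\mathrm{par}}(\mu,\nu)<\theta:=10^{-10}\frac{\epsilon^{1/4}}{n^{5/2}}$. Let $\kappa=10^{-9}\frac{\epsilon^{1/4}}{n^{3/2}}$, $B=\{v:\min\{\lambda^\mu_v,\lambda^\nu_v\}\ge\kappa\}$, $S=V\setminus B$, and $\Omega_B\subseteq\{\pm1\}^B$ the support of both $\mu_B$ and $\nu_B$. Then for every $x\in\Omega_B$, $d_{TV}(\nu^x_S,\mu^x_S)\le4nD$.
   Context: Hardcore model $(G,\lambda)$: weight on $\sigma\in\{-1,+1\}^V$ is $\prod_{v:\sigma_v=+1}\lambda_v$ if $\{v:\sigma_v=+1\}$ is independent, else $0$; Gibbs distribution is the normalized weight. Uniqueness condition: $\lambda_v\le(1-\eta)\frac{(\Delta-1)^{\Delta-1}}{(\Delta-2)^\Delta}$ for all $v$ for a constant $\eta\in(0,1)$, $\Delta\ge3$ the maximum degree. $d_{\mathrm{par}}(\mu,\nu)=\max_v|\lambda^\mu_v-\lambda^\nu_v|$. $\mu_B$ is the marginal on $B$; $\mu^x_S$ is the distribution on $\{\pm1\}^S$ of $\mu$ conditioned on $x$ on $B$ (similarly for $\nu$). *)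

theory Defs
  imports "HOL-Analysis.Analysis"
begin

definition simple_graph :: "'v set \<Rightarrow> ('v \<Rightarrow> 'v \<Rightarrow> bool) \<Rightarrow> bool" where
  "simple_graph V E \<longleftrightarrow> finite V \<and> (\<forall>u v. E u v \<longrightarrow> u \<in> V \<and> v \<in> V)
     \<and> (\<forall>u v. E u v \<longrightarrow> E v u) \<and> (\<forall>v. \<not> E v v)"

definition degree :: "'v set \<Rightarrow> ('v \<Rightarrow> 'v \<Rightarrow> bool) \<Rightarrow> 'v \<Rightarrow> nat" where
  "degree V E v = card {u \<in> V. E v u}"

definition max_degree :: "'v set \<Rightarrow> ('v \<Rightarrow> 'v \<Rightarrow> bool) \<Rightarrow> nat" where
  "max_degree V E = Max (degree V E ` V)"

definition spins :: "'v set \<Rightarrow> ('v \<Rightarrow> int) set" where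
  "spins A = PiE A (\<lambda>_. {-1, 1})"

definition indep_set :: "('v \<Rightarrow> 'v \<Rightarrow> bool) \<Rightarrow> 'v set \<Rightarrow> bool" where
  "indep_set E I \<longleftrightarrow> (\<forall>u\<in>I. \<forall>v\<in>I. \<not> E u v)"

definition hc_weight :: "'v set \<Rightarrow> ('v \<Rightarrow> 'v \<Rightarrow> bool) \<Rightarrow> ('v \<Rightarrow> real) \<Rightarrow> ('v \<Rightarrow> int) \<Rightarrow> real" where
  "hc_weight V E lam \<sigma> =
     (if indep_set E {v \<in> V. \<sigma> v = 1} then (\<Prod>v\<in>{v \<in> V. \<sigma> v = 1}. lam v) else 0)"

definition hc_partition :: "'v set \<Rightarrow> ('v \<Rightarrow> 'v \<Rightarrow> bool) \<Rightarrow> ('v \<Rightarrow> real) \<Rightarrow> real" where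
  "hc_partition V E lam = (\<Sum>\<sigma>\<in>spins V. hc_weight V E lam \<sigma>)"

definition gibbs :: "'v set \<Rightarrow> ('v \<Rightarrow> 'v \<Rightarrow> bool) \<Rightarrow> ('v \<Rightarrow> real) \<Rightarrow> ('v \<Rightarrow> int) \<Rightarrow> real" where
  "gibbs V E lam \<sigma> = hc_weight V E lam \<sigma> / hc_partition V E lam"

definition marginal :: "'v set \<Rightarrow> (('v \<Rightarrow> int) \<Rightarrow> real) \<Rightarrow> 'v set \<Rightarrow> ('v \<Rightarrow> int) \<Rightarrow> real" where
  "marginal V mu B x = (\<Sum>\<sigma>\<in>{\<sigma> \<in> spins V. restrict \<sigma> B = x}. mu \<sigma>)"

definition conditional :: "'v set \<Rightarrow> (('v \<Rightarrow> int) \<Rightarrow> real) \<Rightarrow> 'v set \<Rightarrow> ('v \<Rightarrow> int) \<Rightarrow> 'v set \<Rightarrow> ('v \<Rightarrow> int) \<Rightarrow> real" where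
  "conditional V mu B x S y =
     (\<Sum>\<sigma>\<in>{\<sigma> \<in> spins V. restrict \<sigma> B = x \<and> restrict \<sigma> S = y}. mu \<sigma>) / marginal V mu B x"

definition dtv :: "'a set \<Rightarrow> ('a \<Rightarrow> real) \<Rightarrow> ('a \<Rightarrow> real) \<Rightarrow> real" where
  "dtv Omega p q = (1/2) * (\<Sum>\<omega>\<in>Omega. \<bar>p \<omega> - q \<omega>\<bar>)"

definition d_par :: "'v set \<Rightarrow> ('v \<Rightarrow> real) \<Rightarrow> ('v \<Rightarrow> real) \<Rightarrow> real" where
  "d_par V lam1 lam2 = Max ((\<lambda>v. \<bar>lam1 v - lam2 v\<bar>) ` V)"

definition uniqueness :: "'v set \<Rightarrow> ('v \<Rightarrow> 'v \<Rightarrow> bool) \<Rightarrow> real \<Rightarrow> ('v \<Rightarrow> real) \<Rightarrow> bool" where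
  "uniqueness V E eta lam \<longleftrightarrow>
     (\<forall>v\<in>V. lam v \<le> (1 - eta) * (real (max_degree V E) - 1) ^ (max_degree V E - 1)
                          / (real (max_degree V E) - 2) ^ (max_degree V E))"

end

theory Submission
  imports Defs
begin

text \<open>Conditioned on a configuration \<open>x\<close> on \<open>B\<close> in the support, the Gibbs measure on \<open>S\<close> gives
  a configuration with occupied set \<open>Y\<close> a weight proportional to \<open>\<Prod>v\<in>Y. \<lambda> v\<close>, or zero when \<open>Y\<close> together
  with the occupied set of \<open>x\<close> is not independent. The empty configuration has weight 1, so both
  normalising constants are at least 1, and renormalising at most doubles the \<open>\<ell>\<^sub>1\<close> distance: the total
  variation distance is at most \<open>\<Sum>Y\<subseteq>S. |\<Prod>\<^sub>Y \<lambda>\<^sup>\<nu> - \<Prod>\<^sub>Y \<lambda>\<^sup>\<mu>|\<close>. Off \<open>B\<close> both activities are below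
  \<open>\<kappa> + D\<close>, and peeling off one vertex at a time bounds that sum by \<open>|S| D (1 + \<kappa> + D)\<^bsup>|S|\<^esup> \<le> 3 n D\<close>
  since \<open>n (\<kappa> + D) \<le> 1\<close>.\<close>

lemma dtv_normalized_le_sum_abs_diff:
  fixes p q :: "'a \<Rightarrow> real"
  assumes q_nonneg: "\<forall>w\<in>\<Omega>. 0 \<le> q w" and p_sum: "1 \<le> sum p \<Omega>" and q_sum: "0 < sum q \<Omega>"
  shows "dtv \<Omega> (\<lambda>w. p w / sum p \<Omega>) (\<lambda>w. q w / sum q \<Omega>) \<le> (\<Sum>w\<in>\<Omega>. \<bar>p w - q w\<bar>)"
proof -
  define P Q \<Delta> where "P = sum p \<Omega>" and "Q = sum q \<Omega>" and "\<Delta> = (\<Sum>w\<in>\<Omega>. \<bar>p w - q w\<bar>)"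
  have P1: "1 \<le> P" and Q0: "0 < Q" and \<Delta>0: "0 \<le> \<Delta>"
    using p_sum q_sum by (auto simp: P_def Q_def \<Delta>_def sum_nonneg)
  have "\<bar>p w / P - q w / Q\<bar> \<le> \<bar>p w - q w\<bar> / P + q w * (\<bar>Q - P\<bar> / (P * Q))" if "w \<in> \<Omega>" for w
  proof -
    have "p w / P - q w / Q = (p w - q w) / P + q w * (Q - P) / (P * Q)"
      using P1 Q0 by (simp add: field_simps)
    also have "\<bar>\<dots>\<bar> \<le> \<bar>(p w - q w) / P\<bar> + \<bar>q w * (Q - P) / (P * Q)\<bar>"
      by (rule abs_triangle_ineq)
    also have "\<dots> = \<bar>p w - q w\<bar> / P + q w * (\<bar>Q - P\<bar> / (P * Q))"
      using P1 Q0 q_nonneg that by (simp add: abs_mult)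
    finally show ?thesis .
  qed
  then have "(\<Sum>w\<in>\<Omega>. \<bar>p w / P - q w / Q\<bar>) \<le> (\<Sum>w\<in>\<Omega>. \<bar>p w - q w\<bar> / P + q w * (\<bar>Q - P\<bar> / (P * Q)))"
    by (rule sum_mono)
  also have "\<dots> = \<Delta> / P + Q * (\<bar>Q - P\<bar> / (P * Q))"
    by (simp add: \<Delta>_def Q_def sum.distrib sum_divide_distrib sum_distrib_right)
  also have "\<dots> = (\<Delta> + \<bar>Q - P\<bar>) / P"
    using Q0 by (simp add: add_divide_distrib)
  also have "\<bar>Q - P\<bar> \<le> \<Delta>"
    unfolding P_def Q_def \<Delta>_def
    by (metis (no_types) abs_minus_commute sum_abs sum_subtractf)
  then have "(\<Delta> + \<bar>Q - P\<bar>) / P \<le> 2 * \<Delta> / P"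
    using P1 by (intro divide_right_mono) auto
  also have "\<dots> \<le> 2 * \<Delta>"
    using P1 \<Delta>0 by (simp add: divide_le_eq mult_le_cancel_left1)
  finally show ?thesis
    by (simp add: dtv_def P_def Q_def \<Delta>_def)
qed

lemma sum_Pow_insert:
  assumes "finite F" "u \<notin> F"
  shows "(\<Sum>Y\<in>Pow (insert u F). f Y) = (\<Sum>Y\<in>Pow F. f Y) + (\<Sum>Y\<in>Pow F. f (insert u Y))"
proof -
  have "inj_on (insert u) (Pow F)"
    using assms(2) by (intro inj_onI) (metis PowD insert_ident subsetD)
  then show ?thesis
    unfolding Pow_insert using assms by (subst sum.union_disjoint) (auto simp: sum.reindex)
qed

lemma sum_Pow_abs_prod_diff_le:
  fixes a b :: "'a \<Rightarrow> real" and c D :: real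
  assumes "finite S"
    and "\<And>v. v \<in> S \<Longrightarrow> 0 \<le> a v \<and> a v \<le> c \<and> 0 \<le> b v \<and> b v \<le> c \<and> \<bar>a v - b v\<bar> \<le> D"
  shows "(\<Sum>Y\<in>Pow S. \<bar>prod a Y - prod b Y\<bar>) \<le> card S * D * (1 + c) ^ card S"
  using assms
proof (induction S rule: finite_induct)
  case empty
  then show ?case by simp
next
  case (insert u F)
  define k T where "k = card F" and "T = (\<Sum>Y\<in>Pow F. \<bar>prod a Y - prod b Y\<bar>)"
  have u: "0 \<le> a u" "a u \<le> c" "0 \<le> b u" "b u \<le> c" "\<bar>a u - b u\<bar> \<le> D"
    using insert.prems by auto
  then have c0: "0 \<le> c" and D0: "0 \<le> D"
    by linarith+
  have IH: "T \<le> k * D * (1 + c) ^ k"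
    using insert by (simp add: T_def k_def)
  have a_nonneg: "0 \<le> prod a Y" if "Y \<in> Pow F" for Y
    using that insert.prems by (auto intro!: prod_nonneg)
  have "(\<Sum>Y\<in>Pow F. prod a Y) = (\<Prod>v\<in>F. a v + 1)"
    using prod_add[of F a "\<lambda>_. 1"] insert.hyps by simp
  also have "\<dots> \<le> (1 + c) ^ k"
    using insert.prems c0 by (auto simp: k_def intro!: prod_le_power)
  finally have sum_a: "(\<Sum>Y\<in>Pow F. prod a Y) \<le> (1 + c) ^ k" .
  have "\<bar>prod a (insert u Y) - prod b (insert u Y)\<bar> \<le> D * prod a Y + c * \<bar>prod a Y - prod b Y\<bar>"
    if Y: "Y \<in> Pow F" for Y
  proof -
    have "finite Y" "u \<notin> Y"
      using Y insert.hyps finite_subset by auto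
    then have "prod a (insert u Y) - prod b (insert u Y) = (a u - b u) * prod a Y + b u * (prod a Y - prod b Y)"
      by (simp add: algebra_simps)
    also have "\<bar>\<dots>\<bar> \<le> \<bar>a u - b u\<bar> * prod a Y + b u * \<bar>prod a Y - prod b Y\<bar>"
      using a_nonneg[OF Y] u by (metis abs_mult abs_of_nonneg abs_triangle_ineq)
    also have "\<dots> \<le> D * prod a Y + c * \<bar>prod a Y - prod b Y\<bar>"
      using a_nonneg[OF Y] u by (intro add_mono mult_right_mono) auto
    finally show ?thesis .
  qed
  then have "(\<Sum>Y\<in>Pow F. \<bar>prod a (insert u Y) - prod b (insert u Y)\<bar>)
      \<le> (\<Sum>Y\<in>Pow F. D * prod a Y + c * \<bar>prod a Y - prod b Y\<bar>)"
    by (rule sum_mono)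
  also have "\<dots> = D * (\<Sum>Y\<in>Pow F. prod a Y) + c * T"
    by (simp add: T_def sum.distrib sum_distrib_left)
  also have "\<dots> \<le> D * (1 + c) ^ k + c * (k * D * (1 + c) ^ k)"
    using sum_a IH u by (intro add_mono mult_left_mono) auto
  finally have "(\<Sum>Y\<in>Pow (insert u F). \<bar>prod a Y - prod b Y\<bar>) \<le> T + D * (1 + c) ^ k + c * (k * D * (1 + c) ^ k)"
    using insert.hyps by (simp add: sum_Pow_insert T_def)
  also have "\<dots> \<le> (1 + c) * (k * D * (1 + c) ^ k) + D * (1 + c) ^ Suc k"
  proof -
    have "0 \<le> D * (c * (1 + c) ^ k)"
      using c0 D0 by simp
    then show ?thesis
      using IH by (simp add: algebra_simps)
  qed
  also have "\<dots> = (1 + k) * D * (1 + c) ^ Suc k"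
    by (simp add: algebra_simps)
  finally show ?case
    using insert.hyps by (simp add: k_def)
qed

lemma one_plus_power_le_3:
  fixes c :: real
  assumes "0 \<le> c" "real m * c \<le> 1"
  shows "(1 + c) ^ m \<le> 3"
proof -
  have "(1 + c) ^ m \<le> exp c ^ m"
    using assms(1) by (intro power_mono) auto
  also have "\<dots> = exp (real m * c)"
    by (simp add: exp_of_nat_mult)
  also have "\<dots> \<le> exp 1"
    using assms(2) by simp
  also have "\<dots> \<le> 3"
    by (rule exp_le)
  finally show ?thesis .
qed

lemma sum_Pow_abs_prod_diff_le_3:
  fixes a b :: "'a \<Rightarrow> real" and c D m :: real
  assumes "finite S"
    and bounds: "\<And>v. v \<in> S \<Longrightarrow> 0 \<le> a v \<and> a v \<le> c \<and> 0 \<le> b v \<and> b v \<le> c \<and> \<bar>a v - b v\<bar> \<le> D"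
    and "real (card S) \<le> m" "m * c \<le> 1" "0 \<le> m * D"
  shows "(\<Sum>Y\<in>Pow S. \<bar>prod a Y - prod b Y\<bar>) \<le> 3 * m * D"
proof (cases "S = {}")
  case True
  then show ?thesis
    using assms(5) by (simp add: mult.commute)
next
  case False
  then have "0 \<le> c" "0 \<le> D"
    using bounds by fastforce+
  then have "real (card S) * c \<le> 1"
    using assms(3,4) by (meson mult_right_mono order_trans)
  then have power_le: "(1 + c) ^ card S \<le> 3"
    by (rule one_plus_power_le_3[OF \<open>0 \<le> c\<close>])
  have "(\<Sum>Y\<in>Pow S. \<bar>prod a Y - prod b Y\<bar>) \<le> card S * D * (1 + c) ^ card S"
    using assms(1) bounds by (rule sum_Pow_abs_prod_diff_le)
  also have "\<dots> \<le> m * D * 3"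
    using assms(3) power_le \<open>0 \<le> c\<close> \<open>0 \<le> D\<close> by (intro mult_mono) auto
  finally show ?thesis
    by (simp add: mult_ac)
qed

lemma merge_restrict_self:
  assumes "\<sigma> \<in> extensional (B \<union> S)"
  shows "merge B S (restrict \<sigma> B, restrict \<sigma> S) = \<sigma>"
  using assms by (simp add: extensional_restrict)

lemma bij_betw_merge_spins:
  assumes "B \<inter> S = {}" "x \<in> spins B"
  shows "bij_betw (\<lambda>y. merge B S (x, y)) (spins S) {\<sigma> \<in> spins (B \<union> S). restrict \<sigma> B = x}"
proof (rule bij_betw_byWitness[where f' = "\<lambda>\<sigma>. restrict \<sigma> S"])
  show "\<forall>y\<in>spins S. restrict (merge B S (x, y)) S = y"
    using assms by (simp add: spins_def PiE_restrict)
  show "\<forall>\<sigma>\<in>{\<sigma> \<in> spins (B \<union> S). restrict \<sigma> B = x}. merge B S (x, restrict \<sigma> S) = \<sigma>"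
    by (metis (mono_tags, lifting) mem_Collect_eq merge_restrict_self spins_def PiE_iff)
  show "(\<lambda>y. merge B S (x, y)) ` spins S \<subseteq> {\<sigma> \<in> spins (B \<union> S). restrict \<sigma> B = x}"
    using assms by (auto simp: spins_def PiE_iff extensional_restrict)
  show "(\<lambda>\<sigma>. restrict \<sigma> S) ` {\<sigma> \<in> spins (B \<union> S). restrict \<sigma> B = x} \<subseteq> spins S"
    by (auto simp: spins_def)
qed

lemma marginal_eq_sum_merge:
  assumes "B \<inter> S = {}" "V = B \<union> S" "x \<in> spins B"
  shows "marginal V \<mu> B x = (\<Sum>y\<in>spins S. \<mu> (merge B S (x, y)))"
  unfolding marginal_def assms(2)
  by (rule sum.reindex_bij_betw[OF bij_betw_merge_spins[OF assms(1,3)], symmetric])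

lemma conditional_eq_merge:
  assumes "B \<inter> S = {}" "V = B \<union> S" "x \<in> spins B" "y \<in> spins S"
  shows "conditional V \<mu> B x S y = \<mu> (merge B S (x, y)) / marginal V \<mu> B x"
proof -
  have "merge B S (x, y) \<in> spins V" "restrict (merge B S (x, y)) B = x"
    using bij_betw_apply[OF bij_betw_merge_spins[OF assms(1,3)] assms(4)] assms(2) by auto
  moreover have "restrict (merge B S (x, y)) S = y"
    using assms(1,4) by (simp add: spins_def PiE_restrict)
  moreover have "\<sigma> = merge B S (x, y)"
    if "\<sigma> \<in> spins V" "restrict \<sigma> B = x" "restrict \<sigma> S = y" for \<sigma>
    using that assms(2) merge_restrict_self[of \<sigma> B S] by (simp add: spins_def PiE_iff)
  ultimately have "{\<sigma> \<in> spins V. restrict \<sigma> B = x \<and> restrict \<sigma> S = y} = {merge B S (x, y)}"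
    by blast
  then show ?thesis
    by (simp add: conditional_def)
qed

definition hc_cond_weight ::
  "('v \<Rightarrow> 'v \<Rightarrow> bool) \<Rightarrow> ('v \<Rightarrow> real) \<Rightarrow> 'v set \<Rightarrow> ('v \<Rightarrow> int) \<Rightarrow> 'v set \<Rightarrow> ('v \<Rightarrow> int) \<Rightarrow> real"
  where "hc_cond_weight E lam B x S y =
    (if indep_set E ({v \<in> B. x v = 1} \<union> {v \<in> S. y v = 1}) then prod lam {v \<in> S. y v = 1} else 0)"

lemma hc_cond_weight_nonneg:
  assumes "\<forall>v\<in>S. 0 \<le> lam v"
  shows "0 \<le> hc_cond_weight E lam B x S y"
  using assms by (auto simp: hc_cond_weight_def intro!: prod_nonneg)

lemma hc_weight_merge:
  assumes "finite B" "finite S" "B \<inter> S = {}"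
  shows "hc_weight (B \<union> S) E lam (merge B S (x, y))
           = prod lam {v \<in> B. x v = 1} * hc_cond_weight E lam B x S y"
proof -
  have "{v \<in> B \<union> S. merge B S (x, y) v = 1} = {v \<in> B. x v = 1} \<union> {v \<in> S. y v = 1}"
    using assms(3) by (auto simp: merge_def)
  moreover have "prod lam ({v \<in> B. x v = 1} \<union> {v \<in> S. y v = 1})
                   = prod lam {v \<in> B. x v = 1} * prod lam {v \<in> S. y v = 1}"
    using assms by (intro prod.union_disjoint) auto
  ultimately show ?thesis
    by (simp add: hc_weight_def hc_cond_weight_def)
qed

lemma marginal_gibbs_eq:
  assumes "finite V" "B \<inter> S = {}" "V = B \<union> S" "x \<in> spins B"
  shows "marginal V (gibbs V E lam) B x
           = prod lam {v \<in> B. x v = 1} * (\<Sum>y\<in>spins S. hc_cond_weight E lam B x S y)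
             / hc_partition V E lam"
  using assms
  by (simp add: marginal_eq_sum_merge gibbs_def hc_weight_merge sum_distrib_left sum_divide_distrib)

lemma conditional_gibbs_eq:
  assumes "finite V" "B \<inter> S = {}" "V = B \<union> S" "x \<in> spins B" "y \<in> spins S"
    and "marginal V (gibbs V E lam) B x \<noteq> 0"
  shows "conditional V (gibbs V E lam) B x S y
           = hc_cond_weight E lam B x S y / (\<Sum>y'\<in>spins S. hc_cond_weight E lam B x S y')"
  using assms marginal_gibbs_eq[OF assms(1-4), of E lam]
  by (simp add: conditional_eq_merge gibbs_def hc_weight_merge)

lemma one_le_sum_hc_cond_weight:
  assumes "finite S" "\<forall>v\<in>S. 0 \<le> lam v"
    and "(\<Sum>y\<in>spins S. hc_cond_weight E lam B x S y) \<noteq> 0"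
  shows "1 \<le> (\<Sum>y\<in>spins S. hc_cond_weight E lam B x S y)"
proof -
  obtain y where "hc_cond_weight E lam B x S y \<noteq> 0"
    using assms(3) sum.neutral by metis
  then have indep: "indep_set E {v \<in> B. x v = 1}"
    by (auto simp: hc_cond_weight_def indep_set_def split: if_splits)
  define vacant where "vacant = (\<lambda>v\<in>S. -1 :: int)"
  have "vacant \<in> spins S"
    by (simp add: vacant_def spins_def)
  moreover have "hc_cond_weight E lam B x S vacant = 1"
    using indep by (simp add: hc_cond_weight_def vacant_def)
  moreover have "finite (spins S)"
    using assms(1) by (simp add: spins_def finite_PiE)
  ultimately show ?thesis
    using assms(2) by (metis member_le_sum hc_cond_weight_nonneg)
qed

lemma inj_on_plus_set_spins: "inj_on (\<lambda>y. {v \<in> S. y v = 1}) (spins S)"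
proof (rule inj_onI)
  fix y y' assume y: "y \<in> spins S" "y' \<in> spins S" and eq: "{v \<in> S. y v = 1} = {v \<in> S. y' v = 1}"
  show "y = y'"
  proof (rule extensionalityI[of _ S])
    fix v assume v: "v \<in> S"
    have "y v \<in> {-1, 1}" "y' v \<in> {-1, 1}"
      using y v by (auto simp: spins_def)
    moreover have "y v = 1 \<longleftrightarrow> y' v = 1"
      using eq v by blast
    ultimately show "y v = y' v"
      by auto
  qed (use y in \<open>auto simp: spins_def PiE_iff\<close>)
qed

lemma dtv_conditional_gibbs_le_sum_Pow:
  assumes "finite V" "B \<inter> S = {}" "V = B \<union> S" "x \<in> spins B"
    and nonneg: "\<forall>v\<in>S. 0 \<le> lam_mu v" "\<forall>v\<in>S. 0 \<le> lam_nu v"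
    and supp: "marginal V (gibbs V E lam_mu) B x \<noteq> 0" "marginal V (gibbs V E lam_nu) B x \<noteq> 0"
  shows "dtv (spins S) (conditional V (gibbs V E lam_nu) B x S) (conditional V (gibbs V E lam_mu) B x S)
           \<le> (\<Sum>Y\<in>Pow S. \<bar>prod lam_nu Y - prod lam_mu Y\<bar>)"
proof -
  define h_mu h_nu where "h_mu = hc_cond_weight E lam_mu B x S" and "h_nu = hc_cond_weight E lam_nu B x S"
  have "finite S"
    using assms(1,3) by simp
  have sum_ge_1: "1 \<le> sum h_mu (spins S)" "1 \<le> sum h_nu (spins S)"
    using supp marginal_gibbs_eq[OF assms(1-4)] \<open>finite S\<close> nonneg
    by (auto simp: h_mu_def h_nu_def intro!: one_le_sum_hc_cond_weight)
  have "dtv (spins S) (conditional V (gibbs V E lam_nu) B x S) (conditional V (gibbs V E lam_mu) B x S)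
      = dtv (spins S) (\<lambda>y. h_nu y / sum h_nu (spins S)) (\<lambda>y. h_mu y / sum h_mu (spins S))"
    using assms supp unfolding dtv_def h_mu_def h_nu_def
    by (intro arg_cong[where f = "\<lambda>t. 1/2 * t"] sum.cong) (simp_all add: conditional_gibbs_eq)
  also have "\<dots> \<le> (\<Sum>y\<in>spins S. \<bar>h_nu y - h_mu y\<bar>)"
    using sum_ge_1 nonneg
    by (intro dtv_normalized_le_sum_abs_diff) (auto simp: h_mu_def hc_cond_weight_nonneg)
  also have "\<dots> \<le> (\<Sum>y\<in>spins S. \<bar>prod lam_nu {v \<in> S. y v = 1} - prod lam_mu {v \<in> S. y v = 1}\<bar>)"
    by (intro sum_mono) (simp add: h_mu_def h_nu_def hc_cond_weight_def)
  also have "\<dots> = (\<Sum>Y\<in>(\<lambda>y. {v \<in> S. y v = 1}) ` spins S. \<bar>prod lam_nu Y - prod lam_mu Y\<bar>)"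
    by (simp add: sum.reindex[OF inj_on_plus_set_spins])
  also have "\<dots> \<le> (\<Sum>Y\<in>Pow S. \<bar>prod lam_nu Y - prod lam_mu Y\<bar>)"
    using \<open>finite S\<close> by (intro sum_mono2) auto
  finally show ?thesis .
qed

lemma threshold_le_half_inverse:
  fixes K eps n p :: real
  assumes "0 \<le> K" "K \<le> 1/2" "0 \<le> eps" "eps \<le> 1" "1 \<le> n" "1 \<le> p"
  shows "K * eps powr (1/4) / n powr p \<le> 1 / (2 * n)"
proof -
  have "K * eps powr (1/4) \<le> 1/2"
    using assms(1-4) mult_mono[of K "1/2" "eps powr (1/4)" 1] by (simp add: powr_le1)
  then have "K * eps powr (1/4) / n powr p \<le> (1/2) / n powr p"
    by (rule divide_right_mono) simp
  also have "\<dots> \<le> (1/2) / n"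
    using assms(5,6) powr_mono[of 1 p n] by (intro divide_left_mono) auto
  finally show ?thesis
    by simp
qed

lemma threshold_plus_gap_le_inverse:
  fixes n :: nat and eps D :: real
  assumes "0 < eps" "eps < 1" "D < 10 powr (-10) * eps powr (1/4) / n powr (5/2)"
  shows "n * (10 powr (-9) * eps powr (1/4) / n powr (3/2) + D) \<le> 1"
proof (cases "n = 0")
  case False
  then have "1 \<le> real n"
    by simp
  define kappa where "kappa = 10 powr (-9) * eps powr (1/4) / n powr (3/2)"
  have "D \<le> 1 / (2 * real n)"
    using assms \<open>1 \<le> real n\<close> threshold_le_half_inverse[of "10 powr (-10)" eps n "5/2"]
    by (simp add: powr_minus_divide)
  moreover have "kappa \<le> 1 / (2 * real n)"
    unfolding kappa_def using assms \<open>1 \<le> real n\<close>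
    by (intro threshold_le_half_inverse) (auto simp: powr_minus_divide)
  ultimately have "n * D \<le> 1/2" "n * kappa \<le> 1/2"
    using \<open>1 \<le> real n\<close> by (simp_all add: field_simps)
  then show ?thesis
    by (simp add: kappa_def[symmetric] distrib_left)
qed simp

lemma abs_diff_le_d_par:
  assumes "finite V" "v \<in> V"
  shows "\<bar>lam1 v - lam2 v\<bar> \<le> d_par V lam1 lam2"
  using assms by (simp add: d_par_def)

lemma d_par_nonneg:
  assumes "finite V" "V \<noteq> {}"
  shows "0 \<le> d_par V lam1 lam2"
  using assms abs_diff_le_d_par[OF assms(1)] by (meson abs_ge_zero all_not_in_conv order_trans)

lemma max_le_min_plus_d_par:
  assumes "finite V" "v \<in> V"
  shows "max (lam1 v) (lam2 v) \<le> min (lam1 v) (lam2 v) + d_par V lam1 lam2"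
  using abs_diff_le_d_par[OF assms, of lam1 lam2] by (auto simp: max_def min_def abs_if split: if_split_asm)

theorem lemma5p6:
  fixes V :: "'v set" and E :: "'v \<Rightarrow> 'v \<Rightarrow> bool"
    and lam_mu lam_nu :: "'v \<Rightarrow> real" and eps eta :: real
  assumes graph: "simple_graph V E"
    and Delta: "max_degree V E \<ge> 3"
    and eta: "0 < eta" "eta < 1"
    and eps: "0 < eps" "eps < 1"
    and pos_mu: "\<forall>v\<in>V. lam_mu v > 0"
    and pos_nu: "\<forall>v\<in>V. lam_nu v > 0"
    and uniq_mu: "uniqueness V E eta lam_mu"
    and uniq_nu: "uniqueness V E eta lam_nu"
    and close: "d_par V lam_mu lam_nu
                  < 10 powr (-10) * eps powr (1/4) / real (card V) powr (5/2)"
    and B_def: "B = {v \<in> V. min (lam_mu v) (lam_nu v)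
                   \<ge> 10 powr (-9) * eps powr (1/4) / real (card V) powr (3/2)}"
    and S_def: "S = V - B"
    and x: "x \<in> spins B"
    and supp: "marginal V (gibbs V E lam_mu) B x > 0" "marginal V (gibbs V E lam_nu) B x > 0"
  shows "dtv (spins S) (conditional V (gibbs V E lam_nu) B x S)
                       (conditional V (gibbs V E lam_mu) B x S)
           \<le> 4 * real (card V) * d_par V lam_mu lam_nu"
proof -
  define n D kappa where "n = real (card V)" and "D = d_par V lam_mu lam_nu"
    and "kappa = 10 powr (-9) * eps powr (1/4) / n powr (3/2)"
  have "finite V"
    using graph by (simp add: simple_graph_def)
  have partition: "B \<inter> S = {}" "V = B \<union> S"
    using B_def S_def by auto
  have "0 \<le> n * D"
    using d_par_nonneg[OF \<open>finite V\<close>] by (cases "V = {}") (auto simp: n_def D_def)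
  have activities: "\<And>v. v \<in> S \<Longrightarrow> 0 \<le> lam_nu v \<and> lam_nu v \<le> kappa + D \<and> 0 \<le> lam_mu v
                          \<and> lam_mu v \<le> kappa + D \<and> \<bar>lam_nu v - lam_mu v\<bar> \<le> D"
    using B_def S_def pos_mu pos_nu max_le_min_plus_d_par[OF \<open>finite V\<close>, of _ lam_mu lam_nu]
    by (fastforce simp: kappa_def D_def n_def)
  have "n * (kappa + D) \<le> 1"
    using eps close threshold_plus_gap_le_inverse[of eps D "card V"] by (simp add: kappa_def n_def D_def)
  have "dtv (spins S) (conditional V (gibbs V E lam_nu) B x S) (conditional V (gibbs V E lam_mu) B x S)
          \<le> (\<Sum>Y\<in>Pow S. \<bar>prod lam_nu Y - prod lam_mu Y\<bar>)"
    using \<open>finite V\<close> partition x pos_mu pos_nu supp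
    by (intro dtv_conditional_gibbs_le_sum_Pow) (auto simp: less_imp_le)
  also have "\<dots> \<le> 3 * n * D"
    using \<open>finite V\<close> partition activities \<open>n * (kappa + D) \<le> 1\<close> \<open>0 \<le> n * D\<close>
    by (intro sum_Pow_abs_prod_diff_le_3) (auto simp: n_def card_mono)
  also have "\<dots> \<le> 4 * n * D"
    using \<open>0 \<le> n * D\<close> by linarith
  finally show ?thesis
    by (simp add: n_def D_def)
qed

end
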